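(* Let $\Lambda$ be a finite connected graph with $N$ vertices (sites), let $\mathfrak{h}$ be a finite-dimensional Hilbert space, and let $\mathcal{H}=\bigotimes_{x\in\Lambda}\mathfrak{h}_x$ with each $\mathfrak{h}_x$ a copy of $\mathfrak{h}$. Let $\mathfrak{h}^s\subset\mathfrak{h}$ be a subspace, $\mathfrak{h}^s_x\subset\mathfrak{h}_x$ its copy at site $x$, and let $\mathrm{Sym}^N(\mathfrak{h}^s)\subset\bigotimes_{x\in\Lambda}\mathfrak{h}^s_x\subset\mathcal{H}$ be the totally symmetric subspace. If a linear operator $\hat{O}$ on $\mathcal{H}$ satisfies $\hat{O}v=0$ for all $v\in\mathrm{Sym}^N(\mathfrak{h}^s)$, then $\hat{O}$ can be written as $$\hat{O}=\sum_{x\in\Lambda}\hat{o}^{(1)}_{[x]}\hat{P}_x+\sum_{\langle x,y\rangle}\hat{o}^{(2)}_{[xy]}\hat{P}_{xy},$$ where the second sum runs over pairs of nearest-neighbour (adjacent) sites, each $\hat{P}_x$ is an orthogonal projector acting non-trivially only on site $x$, each $\hat{P}_{xy}$ is an orthogonal projector acting non-trivially only on the pair of sites $x,y$, every $\hat{P}_x$ and $\hat{P}_{xy}$ annihilates $\mathrm{Sym}^N(\mathfrak{h}^s)$, and $\hat{o}^{(1)}_{[x]},\hat{o}^{(2)}_{[xy]}$ are some linear operators on $\mathcal{H}$ (not required to be local).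
   Context: For a permutation $\sigma\in\mathfrak{S}_N$ of the sites, $\hat{\sigma}$ denotes the operator on $\mathcal{H}$ permuting tensor factors: $\hat{\sigma}\bigotimes_{x}|e_x\rangle_x=\bigotimes_x|e_{\sigma(x)}\rangle_x$. The totally symmetric subspace is $\mathrm{Sym}^N(\mathfrak{h}^s)=\{v\in\bigotimes_{x\in\Lambda}\mathfrak{h}^s_x:\hat{\sigma}v=v\ \forall\sigma\in\mathfrak{S}_N\}$, viewed as a subspace of $\mathcal{H}$. An operator "annihilates" a subspace if it maps every vector of it to $0$. *)

theory Defs
  imports Complex_Main
begin

text \<open>Model: the single-site Hilbert space h is identified (via an orthonormal basis indexed by
the finite type 'b) with functions 'b \<Rightarrow> complex with the standard inner product.
The total space H is identified with functions ('v \<Rightarrow> 'b) \<Rightarrow> complex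
(coefficients with respect to the product basis indexed by configurations c : 'v \<Rightarrow> 'b).\<close>

definition op_apply :: "(('v \<Rightarrow> 'b) \<Rightarrow> ('v \<Rightarrow> 'b) \<Rightarrow> complex) \<Rightarrow> (('v \<Rightarrow> 'b) \<Rightarrow> complex) \<Rightarrow> (('v \<Rightarrow> 'b) \<Rightarrow> complex)"
  where "op_apply A u = (\<lambda>c. \<Sum>c'\<in>UNIV. A c c' * u c')"

definition op_mult :: "(('v \<Rightarrow> 'b) \<Rightarrow> ('v \<Rightarrow> 'b) \<Rightarrow> complex) \<Rightarrow> (('v \<Rightarrow> 'b) \<Rightarrow> ('v \<Rightarrow> 'b) \<Rightarrow> complex) \<Rightarrow> (('v \<Rightarrow> 'b) \<Rightarrow> ('v \<Rightarrow> 'b) \<Rightarrow> complex)"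
  where "op_mult A B = (\<lambda>c c''. \<Sum>c'\<in>UNIV. A c c' * B c' c'')"

definition is_orth_proj :: "(('v \<Rightarrow> 'b) \<Rightarrow> ('v \<Rightarrow> 'b) \<Rightarrow> complex) \<Rightarrow> bool"
  where "is_orth_proj P \<longleftrightarrow> op_mult P P = P \<and> (\<forall>c c'. P c' c = cnj (P c c'))"

text \<open>P acts non-trivially only on the sites in S, i.e. P = A \<otimes> Id on the complement of S.\<close>
definition acts_only_on :: "'v set \<Rightarrow> (('v \<Rightarrow> 'b) \<Rightarrow> ('v \<Rightarrow> 'b) \<Rightarrow> complex) \<Rightarrow> bool"
  where "acts_only_on S P \<longleftrightarrow>
     (\<forall>c c'. (\<exists>z. z \<notin> S \<and> c z \<noteq> c' z) \<longrightarrow> P c c' = 0) \<and>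
     (\<forall>c c' d d'. (\<forall>z\<in>S. c z = d z \<and> c' z = d' z) \<longrightarrow>
         (\<forall>z. z \<notin> S \<longrightarrow> c z = c' z) \<longrightarrow> (\<forall>z. z \<notin> S \<longrightarrow> d z = d' z) \<longrightarrow>
         P c c' = P d d')"

definition csubspace :: "('b \<Rightarrow> complex) set \<Rightarrow> bool"
  where "csubspace V \<longleftrightarrow> (\<lambda>i. 0) \<in> V \<and> (\<forall>u\<in>V. \<forall>w\<in>V. (\<lambda>i. u i + w i) \<in> V)
                         \<and> (\<forall>a::complex. \<forall>u\<in>V. (\<lambda>i. a * u i) \<in> V)"

text \<open>The tensor product of the site copies of V inside H: the complex span of product vectors.\<close>
definition tensor_sub :: "('b \<Rightarrow> complex) set \<Rightarrow> (('v::finite \<Rightarrow> 'b) \<Rightarrow> complex) set"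
  where "tensor_sub V = {u. \<exists>(n::nat) (a::nat \<Rightarrow> complex) (vs :: nat \<Rightarrow> 'v \<Rightarrow> 'b \<Rightarrow> complex).
            (\<forall>k<n. \<forall>x. vs k x \<in> V) \<and>
            u = (\<lambda>c. \<Sum>k<n. a k * (\<Prod>x\<in>UNIV. vs k x (c x)))}"

text \<open>The site permutation operator: sends the basis vector c to c \<circ> \<sigma>.\<close>
definition perm_op :: "('v \<Rightarrow> 'v) \<Rightarrow> (('v \<Rightarrow> 'b) \<Rightarrow> complex) \<Rightarrow> (('v \<Rightarrow> 'b) \<Rightarrow> complex)"
  where "perm_op \<sigma> u = (\<lambda>d. u (d \<circ> inv \<sigma>))"

definition sym_sub :: "('b \<Rightarrow> complex) set \<Rightarrow> (('v::finite \<Rightarrow> 'b) \<Rightarrow> complex) set"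
  where "sym_sub V = {u \<in> tensor_sub V. \<forall>\<sigma>. bij \<sigma> \<longrightarrow> perm_op \<sigma> u = u}"

definition annihilates :: "(('v \<Rightarrow> 'b) \<Rightarrow> ('v \<Rightarrow> 'b) \<Rightarrow> complex) \<Rightarrow> (('v \<Rightarrow> 'b) \<Rightarrow> complex) set \<Rightarrow> bool"
  where "annihilates A W \<longleftrightarrow> (\<forall>u\<in>W. op_apply A u = (\<lambda>c. 0))"

definition edges :: "('v \<Rightarrow> 'v \<Rightarrow> bool) \<Rightarrow> 'v set set"
  where "edges E = {{x, y} | x y. E x y}"

definition connected_graph :: "('v \<Rightarrow> 'v \<Rightarrow> bool) \<Rightarrow> bool"
  where "connected_graph E \<longleftrightarrow> (\<forall>x y. (x, y) \<in> {(a, b). E a b}\<^sup>*)"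

end

theory Submission
  imports Defs "HOL-Library.Function_Algebras" "HOL-Combinatorics.Permutations"
begin

text \<open>Let R be the orthogonal projector of the one-site space onto the orthogonal complement of
  hs, let P_x be R acting on site x, and let P_xy = (1 - swap_xy)/2 for every edge {x, y}.
  A vector is killed by all P_x iff each of its one-site slices lies in hs, i.e. iff it lies in
  the tensor product of the copies of hs; it is killed by all P_xy iff it is invariant under the
  transpositions along edges, which generate the symmetric group because the graph is connected.
  So the common kernel of these projectors is Sym^N(hs). Since G = sum P_x + sum P_xy is a sum of
  orthogonal projectors, its kernel is exactly this common kernel; hence Op vanishes on ker G,
  factors as Op = X G, and X serves as every coefficient operator.\<close>

section \<open>Matrices over a finite index type\<close>

definition cscale :: "complex \<Rightarrow> ('i \<Rightarrow> complex) \<Rightarrow> ('i \<Rightarrow> complex)"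
  where "cscale a u = (\<lambda>i. a * u i)"

interpretation cvs: vector_space "cscale :: complex \<Rightarrow> ('i \<Rightarrow> complex) \<Rightarrow> _"
  by unfold_locales (auto simp: cscale_def fun_eq_iff algebra_simps)

interpretation cvs_pair: vector_space_pair
  "cscale :: complex \<Rightarrow> ('i \<Rightarrow> complex) \<Rightarrow> _" "cscale :: complex \<Rightarrow> ('j \<Rightarrow> complex) \<Rightarrow> _"
  by unfold_locales

lemma subspace_iff_csubspace: "cvs.subspace V \<longleftrightarrow> csubspace V"
  unfolding csubspace_def cvs.subspace_def by (simp add: zero_fun_def plus_fun_def cscale_def)

lemma sum_fun_apply: "(sum f S) x = (\<Sum>s\<in>S. f s x)"
  by (induction S rule: infinite_finite_induct) auto

definition mat_apply :: "('i \<Rightarrow> 'i \<Rightarrow> complex) \<Rightarrow> ('i \<Rightarrow> complex) \<Rightarrow> ('i \<Rightarrow> complex)"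
  where "mat_apply A u = (\<lambda>i. \<Sum>j\<in>UNIV. A i j * u j)"

definition mat_mult :: "('i \<Rightarrow> 'i \<Rightarrow> complex) \<Rightarrow> ('i \<Rightarrow> 'i \<Rightarrow> complex) \<Rightarrow> ('i \<Rightarrow> 'i \<Rightarrow> complex)"
  where "mat_mult A B = (\<lambda>i k. \<Sum>j\<in>UNIV. A i j * B j k)"

definition unit_vec :: "'i \<Rightarrow> 'i \<Rightarrow> complex"
  where "unit_vec j = (\<lambda>i. if i = j then 1 else 0)"

lemma op_apply_eq_mat_apply: "op_apply = mat_apply"
  by (simp add: op_apply_def mat_apply_def fun_eq_iff)

lemma op_mult_eq_mat_mult: "op_mult = mat_mult"
  by (simp add: op_mult_def mat_mult_def fun_eq_iff)

context
  fixes A :: "'i::finite \<Rightarrow> 'i \<Rightarrow> complex"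
begin

lemma mat_apply_mult:
  fixes B :: "'i \<Rightarrow> 'i \<Rightarrow> complex"
  shows "mat_apply (mat_mult A B) u = mat_apply A (mat_apply B u)"
proof -
  have "(\<Sum>j\<in>UNIV. (\<Sum>k\<in>UNIV. A i k * B k j) * u j) = (\<Sum>k\<in>UNIV. A i k * (\<Sum>j\<in>UNIV. B k j * u j))" for i
    by (simp add: sum_distrib_left sum_distrib_right mult.assoc) (rule sum.swap)
  thus ?thesis by (simp add: mat_apply_def mat_mult_def fun_eq_iff)
qed

lemma mat_apply_unit_vec: "mat_apply A (unit_vec j) = (\<lambda>i. A i j)"
  by (simp add: mat_apply_def unit_vec_def if_distrib cong: if_cong)

lemma mat_apply_add: "mat_apply A (u + v) = mat_apply A u + mat_apply A v"
  by (simp add: mat_apply_def fun_eq_iff algebra_simps sum.distrib)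

lemma mat_apply_diff: "mat_apply A (u - v) = mat_apply A u - mat_apply A v"
  by (simp add: mat_apply_def fun_eq_iff algebra_simps sum_subtractf)

lemma mat_apply_cscale: "mat_apply A (cscale a u) = cscale a (mat_apply A u)"
  by (simp add: mat_apply_def fun_eq_iff algebra_simps cscale_def sum_distrib_left)

lemma mat_apply_zero: "mat_apply A 0 = 0"
  by (simp add: mat_apply_def fun_eq_iff)

lemma linear_mat_apply: "Vector_Spaces.linear cscale cscale (mat_apply A)"
  by unfold_locales (simp_all add: mat_apply_add mat_apply_cscale)

end

lemma mat_eqI:
  fixes A B :: "'i::finite \<Rightarrow> 'i \<Rightarrow> complex"
  assumes "\<And>v. mat_apply A v = mat_apply B v"
  shows "A = B"
proof (intro ext)
  fix i j
  show "A i j = B i j" using assms[of "unit_vec j"] by (simp add: mat_apply_unit_vec fun_eq_iff)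
qed

lemma vec_eq_sum_unit_vec: "(w :: 'i::finite \<Rightarrow> complex) = (\<Sum>j\<in>UNIV. cscale (w j) (unit_vec j))"
  by (simp add: fun_eq_iff sum_fun_apply cscale_def unit_vec_def if_distrib cong: if_cong)

lemma span_unit_vec: "cvs.span (range unit_vec) = (UNIV :: ('i::finite \<Rightarrow> complex) set)"
proof -
  have "w \<in> cvs.span (range unit_vec)" for w :: "'i \<Rightarrow> complex"
    by (subst vec_eq_sum_unit_vec) (intro cvs.span_sum cvs.span_scale cvs.span_base; simp)
  thus ?thesis by blast
qed

lemma mat_apply_matrix_of_linear:
  assumes "Vector_Spaces.linear cscale cscale f"
  shows "mat_apply (\<lambda>i j. f (unit_vec j) i) w = f (w :: 'i::finite \<Rightarrow> complex)"
proof -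
  interpret f: Vector_Spaces.linear cscale cscale f by (fact assms)
  have "f w = (\<Sum>j\<in>UNIV. cscale (w j) (f (unit_vec j)))"
    by (subst vec_eq_sum_unit_vec) (simp add: f.sum f.scale)
  thus ?thesis by (simp add: mat_apply_def fun_eq_iff sum_fun_apply cscale_def mult.commute)
qed

lemma mat_factor_through_kernel:
  fixes G A :: "'i::finite \<Rightarrow> 'i \<Rightarrow> complex"
  assumes "\<And>u. mat_apply G u = 0 \<Longrightarrow> mat_apply A u = 0"
  shows "\<exists>X. A = mat_mult X G"
proof -
  obtain g where g: "Vector_Spaces.linear cscale cscale g" "\<forall>w\<in>range (mat_apply G). mat_apply G (g w) = w"
    using cvs_pair.linear_exists_right_inverse_on[OF linear_mat_apply cvs.subspace_UNIV] by blast
  define X where "X = (\<lambda>i j. mat_apply A (g (unit_vec j)) i)"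
  have "mat_apply (mat_mult X G) v = mat_apply A v" for v
  proof -
    have "mat_apply G (g (mat_apply G v) - v) = 0"
      using g(2) by (simp add: mat_apply_diff)
    hence "mat_apply A (g (mat_apply G v) - v) = 0" by (rule assms)
    hence "mat_apply A (g (mat_apply G v)) = mat_apply A v" by (simp add: mat_apply_diff)
    moreover have "mat_apply X w = mat_apply A (g w)" for w
      unfolding X_def
      by (rule mat_apply_matrix_of_linear[of "mat_apply A \<circ> g", unfolded o_def])
        (rule Vector_Spaces.linear_compose[OF g(1) linear_mat_apply, unfolded o_def])
    ultimately show ?thesis by (simp add: mat_apply_mult)
  qed
  thus ?thesis by (metis mat_eqI)
qed

section \<open>Orthogonal projectors\<close>

definition cinner :: "('i \<Rightarrow> complex) \<Rightarrow> ('i \<Rightarrow> complex) \<Rightarrow> complex"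
  where "cinner u v = (\<Sum>c\<in>UNIV. cnj (u c) * v c)"

definition sq_norm :: "('i \<Rightarrow> complex) \<Rightarrow> real"
  where "sq_norm w = (\<Sum>c\<in>UNIV. (cmod (w c))\<^sup>2)"

definition hermitian :: "('i \<Rightarrow> 'i \<Rightarrow> complex) \<Rightarrow> bool"
  where "hermitian A \<longleftrightarrow> (\<forall>i j. A j i = cnj (A i j))"

definition orth_projector :: "('i \<Rightarrow> 'i \<Rightarrow> complex) \<Rightarrow> bool"
  where "orth_projector P \<longleftrightarrow> mat_mult P P = P \<and> hermitian P"

lemma annihilates_iff: "annihilates A W \<longleftrightarrow> (\<forall>u\<in>W. mat_apply A u = 0)"
  by (simp add: annihilates_def op_apply_eq_mat_apply zero_fun_def)

lemma is_orth_proj_iff: "is_orth_proj P \<longleftrightarrow> orth_projector P"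
  by (simp add: is_orth_proj_def orth_projector_def hermitian_def op_mult_eq_mat_mult)

lemma cinner_add_right: "cinner r (u + v) = cinner r u + cinner r v"
  by (simp add: cinner_def algebra_simps sum.distrib)

lemma cinner_diff_right: "cinner r (u - v) = cinner r u - cinner r v"
  by (simp add: cinner_def algebra_simps sum_subtractf)

lemma cinner_cscale_right: "cinner r (cscale a u) = a * cinner r u"
  by (simp add: cinner_def algebra_simps cscale_def sum_distrib_left)

lemma cinner_sum_right: "cinner r (\<Sum>i\<in>I. f i) = (\<Sum>i\<in>I. cinner r (f i))"
  unfolding cinner_def sum_fun_apply sum_distrib_left by (rule sum.swap)

lemma cinner_self: "cinner w w = of_real (sq_norm w)"
  unfolding cinner_def sq_norm_def of_real_sum
  by (rule sum.cong) (simp_all only: complex_norm_square mult.commute)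

lemma sq_norm_nonneg: "sq_norm w \<ge> 0"
  unfolding sq_norm_def by (simp add: sum_nonneg)

lemma sq_norm_eq_0_iff: "sq_norm (w :: 'i::finite \<Rightarrow> complex) = 0 \<longleftrightarrow> w = 0"
  unfolding sq_norm_def by (simp add: sum_nonneg_eq_0_iff fun_eq_iff)

lemma cinner_hermitian:
  fixes Q :: "'i::finite \<Rightarrow> 'i \<Rightarrow> complex"
  assumes "hermitian Q"
  shows "cinner u (mat_apply Q v) = cinner (mat_apply Q u) v"
proof -
  have "cinner u (mat_apply Q v) = (\<Sum>c\<in>UNIV. \<Sum>d\<in>UNIV. cnj (u c) * Q c d * v d)"
    by (simp add: cinner_def mat_apply_def sum_distrib_left mult.assoc)
  also have "\<dots> = (\<Sum>d\<in>UNIV. \<Sum>c\<in>UNIV. cnj (Q d c * u c) * v d)"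
  proof (subst sum.swap, intro sum.cong refl)
    fix c d
    have "Q c d = cnj (Q d c)" using assms unfolding hermitian_def by blast
    thus "cnj (u c) * Q c d * v d = cnj (Q d c * u c) * v d" by simp
  qed
  also have "\<dots> = cinner (mat_apply Q u) v"
    by (simp add: cinner_def mat_apply_def sum_distrib_right)
  finally show ?thesis .
qed

lemma cinner_kernel_range:
  fixes Q :: "'i::finite \<Rightarrow> 'i \<Rightarrow> complex"
  assumes "hermitian Q" "mat_apply Q r = 0"
  shows "cinner r (mat_apply Q v) = 0"
  using cinner_hermitian[OF assms(1), of r v] assms(2) by (simp add: cinner_def)

lemma orth_projector_idem:
  "orth_projector P \<Longrightarrow> mat_apply P (mat_apply P v) = mat_apply (P :: 'i::finite \<Rightarrow> _) v"
  unfolding orth_projector_def by (metis mat_apply_mult)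

lemma cinner_orth_projector:
  fixes P :: "'i::finite \<Rightarrow> 'i \<Rightarrow> complex"
  assumes "orth_projector P"
  shows "cinner u (mat_apply P u) = of_real (sq_norm (mat_apply P u))"
proof -
  have "cinner u (mat_apply P u) = cinner u (mat_apply P (mat_apply P u))"
    using orth_projector_idem[OF assms] by simp
  also have "\<dots> = cinner (mat_apply P u) (mat_apply P u)"
    using assms unfolding orth_projector_def by (simp add: cinner_hermitian)
  finally show ?thesis by (simp add: cinner_self)
qed

lemma orth_projector_add_rank_one:
  fixes Q :: "'i::finite \<Rightarrow> 'i \<Rightarrow> complex"
  assumes Q: "orth_projector Q" and Qr: "mat_apply Q r = 0" and "r \<noteq> 0"
  defines "Q' \<equiv> \<lambda>i j. Q i j + r i * cnj (r j) / cinner r r"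
  shows "orth_projector Q'"
    and "mat_apply Q' v = mat_apply Q v + cscale (cinner r v / cinner r r) r"
proof -
  have nz: "cinner r r \<noteq> 0"
    using \<open>r \<noteq> 0\<close> by (simp add: cinner_self sq_norm_eq_0_iff)
  show Q'v: "mat_apply Q' v = mat_apply Q v + cscale (cinner r v / cinner r r) r" for v
    by (simp add: Q'_def mat_apply_def cinner_def cscale_def fun_eq_iff algebra_simps
        sum.distrib sum_distrib_left sum_divide_distrib)
  have rQ: "cinner r (mat_apply Q v) = 0" for v
    using Q Qr unfolding orth_projector_def by (simp add: cinner_kernel_range)
  have "mat_mult Q' Q' = Q'"
  proof (rule mat_eqI)
    fix v
    let ?s = "cinner r v / cinner r r"
    have "mat_apply Q' (mat_apply Q' v)
        = mat_apply Q (mat_apply Q' v) + cscale (cinner r (mat_apply Q' v) / cinner r r) r"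
      by (rule Q'v)
    also have "mat_apply Q (mat_apply Q' v) = mat_apply Q v"
      by (simp add: Q'v mat_apply_add mat_apply_cscale Qr orth_projector_idem[OF Q])
    also have "cinner r (mat_apply Q' v) = ?s * cinner r r"
      by (simp add: Q'v cinner_add_right cinner_cscale_right rQ)
    also have "mat_apply Q v + cscale (?s * cinner r r / cinner r r) r = mat_apply Q' v"
      using nz by (simp add: Q'v)
    finally have "mat_apply Q' (mat_apply Q' v) = mat_apply Q' v" .
    thus "mat_apply (mat_mult Q' Q') v = mat_apply Q' v" by (simp add: mat_apply_mult)
  qed
  moreover have "hermitian Q'"
  proof -
    have real: "cnj (cinner r r) = cinner r r" by (simp add: cinner_self)
    have "Q' j i = cnj (Q' i j)" for i j
    proof -
      have "Q j i = cnj (Q i j)" using Q unfolding orth_projector_def hermitian_def by blast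
      thus ?thesis unfolding Q'_def by (simp add: real mult_ac)
    qed
    thus ?thesis unfolding hermitian_def by blast
  qed
  ultimately show "orth_projector Q'" unfolding orth_projector_def ..
qed

lemma orth_projector_onto_span_insert:
  fixes Q :: "'i::finite \<Rightarrow> 'i \<Rightarrow> complex"
  assumes Q: "orth_projector Q" "\<forall>v\<in>B. mat_apply Q v = v"
    and range_Q: "range (mat_apply Q) \<subseteq> cvs.span B"
  shows "\<exists>Q'. orth_projector Q' \<and> (\<forall>v\<in>insert w B. mat_apply Q' v = v)
    \<and> range (mat_apply Q') \<subseteq> cvs.span (insert w B)"
proof -
  have span_mono: "cvs.span B \<subseteq> cvs.span (insert w B)" by (rule cvs.span_mono) auto
  define r where "r = w - mat_apply Q w"
  show ?thesis
  proof (cases "r = 0")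
    case True
    hence "w \<in> cvs.span B" using range_Q unfolding r_def by (metis right_minus_eq rangeI subsetD)
    hence "cvs.span (insert w B) = cvs.span B" by (rule cvs.span_redundant)
    moreover have "mat_apply Q w = w" using True unfolding r_def by simp
    ultimately show ?thesis using Q range_Q by auto
  next
    case False
    have Qr: "mat_apply Q r = 0"
      by (simp add: r_def mat_apply_diff orth_projector_idem[OF Q(1)])
    define Q' where "Q' = (\<lambda>i j. Q i j + r i * cnj (r j) / cinner r r)"
    have Q': "orth_projector Q'"
      and Q'_apply: "mat_apply Q' v = mat_apply Q v + cscale (cinner r v / cinner r r) r" for v
      unfolding Q'_def by (rule orth_projector_add_rank_one[OF Q(1) Qr False])+
    have r_orth: "cinner r (mat_apply Q v) = 0" for v
      using Q(1) Qr unfolding orth_projector_def by (simp add: cinner_kernel_range)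
    have "mat_apply Q' v = v" if "v \<in> B" for v
      using Q(2) r_orth[of v] that by (simp add: Q'_apply cscale_def zero_fun_def[symmetric])
    moreover have "mat_apply Q' w = w"
    proof -
      have "cinner r w = cinner r r"
        using r_orth[of w] by (simp add: r_def cinner_diff_right)
      moreover have "cinner r r \<noteq> 0"
        using False by (simp add: cinner_self sq_norm_eq_0_iff)
      ultimately show ?thesis by (simp add: Q'_apply cscale_def r_def fun_eq_iff)
    qed
    moreover have "mat_apply Q' v \<in> cvs.span (insert w B)" for v
    proof -
      have Q_span: "mat_apply Q u \<in> cvs.span (insert w B)" for u using range_Q span_mono by blast
      moreover have "r \<in> cvs.span (insert w B)"
        unfolding r_def by (intro cvs.span_diff cvs.span_base Q_span) simp
      ultimately show ?thesis unfolding Q'_apply by (intro cvs.span_add cvs.span_scale)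
    qed
    ultimately show ?thesis using Q' by blast
  qed
qed

lemma orth_projector_onto_span:
  fixes B :: "('i::finite \<Rightarrow> complex) set"
  assumes "finite B"
  shows "\<exists>Q. orth_projector Q \<and> (\<forall>v\<in>B. mat_apply Q v = v) \<and> range (mat_apply Q) \<subseteq> cvs.span B"
  using assms
proof (induction B rule: finite_induct)
  case empty
  have "orth_projector (\<lambda>i j. 0 :: complex)"
    by (simp add: orth_projector_def mat_mult_def hermitian_def)
  moreover have "mat_apply (\<lambda>i j. 0) v = 0" for v :: "'i \<Rightarrow> complex"
    by (simp add: mat_apply_def fun_eq_iff)
  ultimately show ?case by auto
next
  case (insert w B)
  thus ?case using orth_projector_onto_span_insert by blast
qed

lemma orth_projector_onto_subspace:
  fixes V :: "('i::finite \<Rightarrow> complex) set"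
  assumes "csubspace V"
  obtains Q where "orth_projector Q" "\<forall>v\<in>V. mat_apply Q v = v" "range (mat_apply Q) \<subseteq> V"
proof -
  have V: "cvs.subspace V" using assms by (simp add: subspace_iff_csubspace)
  obtain B where B: "B \<subseteq> V" "cvs.independent B" "V \<subseteq> cvs.span B"
    by (rule cvs.maximal_independent_subset)
  have "finite B"
    using cvs.independent_span_bound[OF _ B(2), of "range unit_vec"] by (simp add: span_unit_vec)
  then obtain Q where "orth_projector Q" "\<forall>v\<in>B. mat_apply Q v = v" "range (mat_apply Q) \<subseteq> cvs.span B"
    using orth_projector_onto_span by blast
  moreover have span_B: "cvs.span B = V" by (rule cvs.span_subspace[OF B(1,3) V])
  moreover have "mat_apply Q v = v" if "v \<in> cvs.span B" for v
    using that \<open>\<forall>v\<in>B. mat_apply Q v = v\<close>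
    by (induction rule: cvs.span_induct)
      (auto simp: cvs.subspace_def mat_apply_add mat_apply_cscale mat_apply_zero)
  ultimately show ?thesis using that by blast
qed

lemma orth_projector_with_kernel:
  fixes V :: "('i::finite \<Rightarrow> complex) set"
  assumes "csubspace V"
  obtains R where "orth_projector R" "\<And>v. mat_apply R v = 0 \<longleftrightarrow> v \<in> V"
proof -
  obtain Q where Q: "orth_projector Q" "\<forall>v\<in>V. mat_apply Q v = v" "range (mat_apply Q) \<subseteq> V"
    using orth_projector_onto_subspace[OF assms] by blast
  define R where "R = (\<lambda>i j. of_bool (i = j) - Q i j)"
  have R_apply: "mat_apply R v = v - mat_apply Q v" for v
    by (simp add: R_def mat_apply_def fun_eq_iff left_diff_distrib sum_subtractf)
  have "mat_mult R R = R"
    by (rule mat_eqI) (simp add: mat_apply_mult R_apply mat_apply_diff orth_projector_idem[OF Q(1)])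
  moreover have "hermitian R"
    unfolding hermitian_def
  proof (intro allI)
    fix i j
    have "Q j i = cnj (Q i j)" using Q(1) unfolding orth_projector_def hermitian_def by blast
    thus "R j i = cnj (R i j)" by (simp add: R_def)
  qed
  moreover have "mat_apply R v = 0 \<longleftrightarrow> v \<in> V" for v
    using Q(2,3) unfolding R_apply by (metis eq_iff_diff_eq_0 rangeI subsetD)
  ultimately show ?thesis using that by (simp add: orth_projector_def)
qed

section \<open>Slices and the tensor product subspace\<close>

definition slice :: "(('v \<Rightarrow> 'b) \<Rightarrow> complex) \<Rightarrow> ('v \<Rightarrow> 'b) \<Rightarrow> 'v \<Rightarrow> 'b \<Rightarrow> complex"
  where "slice u c x = (\<lambda>b. u (c(x := b)))"

lemma slice_fun_upd [simp]: "slice u (c(x := b)) x = slice u c x"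
  by (simp add: slice_def)

lemma csubspace_sum:
  assumes "csubspace V" "\<And>k. k \<in> K \<Longrightarrow> f k \<in> V"
  shows "(\<Sum>k\<in>K. f k) \<in> V"
  using assms cvs.subspace_sum by (auto simp flip: subspace_iff_csubspace)

lemma csubspace_cscale: "csubspace V \<Longrightarrow> v \<in> V \<Longrightarrow> cscale a v \<in> V"
  unfolding csubspace_def cscale_def by blast

lemma slice_mem_if_tensor_sub:
  fixes u :: "('v::finite \<Rightarrow> 'b) \<Rightarrow> complex"
  assumes V: "csubspace V" and "u \<in> tensor_sub V"
  shows "slice u c x \<in> V"
proof -
  obtain n :: nat and a w where w: "\<forall>k<n. \<forall>y. w k y \<in> V"
    and u: "u = (\<lambda>c. \<Sum>k<n. a k * (\<Prod>y\<in>UNIV. w k y (c y)))"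
    using assms(2) unfolding tensor_sub_def by blast
  define p where "p k = (\<Prod>y\<in>UNIV - {x}. w k y (c y))" for k
  have "(\<Prod>y\<in>UNIV. w k y ((c(x := b)) y)) = w k x b * p k" for k b
    unfolding p_def by (subst prod.remove[of _ x]) (auto intro!: prod.cong)
  hence "slice u c x = (\<Sum>k<n. cscale (a k * p k) (w k x))"
    by (simp add: slice_def u fun_eq_iff sum_fun_apply cscale_def mult_ac)
  also have "\<dots> \<in> V"
    using w by (intro csubspace_sum[OF V] csubspace_cscale[OF V]) auto
  finally show ?thesis .
qed

text \<open>The right-hand side is Q applied at every site of D.\<close>
lemma expand_by_slice_projector:
  fixes u :: "('v::finite \<Rightarrow> 'b::finite) \<Rightarrow> complex"
  assumes Q: "\<And>c x. mat_apply Q (slice u c x) = slice u c x"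
  shows "u c = (\<Sum>c'\<in>{c'. \<forall>z. z \<notin> D \<longrightarrow> c' z = c z}. (\<Prod>y\<in>D. Q (c y) (c' y)) * u c')"
proof (induction D arbitrary: c rule: infinite_finite_induct)
  case (infinite D)
  thus ?case by simp
next
  case empty
  have "{c'. \<forall>z. c' z = c z} = {c}" by (auto simp: fun_eq_iff)
  thus ?case by simp
next
  case (insert x D)
  define T where "T = {c'. \<forall>z. z \<notin> insert x D \<longrightarrow> c' z = c z}"
  define S where "S b = {c'. \<forall>z. z \<notin> D \<longrightarrow> c' z = (c(x := b)) z}" for b
  define h where "h c' = (\<Prod>y\<in>insert x D. Q (c y) (c' y)) * u c'" for c'
  have "sum h T = (\<Sum>b\<in>UNIV. sum h {c' \<in> T. c' x = b})"
    by (rule sum.group[symmetric]) auto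
  also have "\<dots> = (\<Sum>b\<in>UNIV. Q (c x) b * u (c(x := b)))"
  proof (rule sum.cong[OF refl])
    fix b
    have "{c' \<in> T. c' x = b} = S b" using insert.hyps by (auto simp: T_def S_def)
    hence "sum h {c' \<in> T. c' x = b} = (\<Sum>c'\<in>S b. Q (c x) b * ((\<Prod>y\<in>D. Q ((c(x := b)) y) (c' y)) * u c'))"
      using insert.hyps by (auto simp: h_def S_def mult.assoc intro!: sum.cong prod.cong)
    also have "\<dots> = Q (c x) b * u (c(x := b))"
      by (simp add: S_def insert.IH[of "c(x := b)"] sum_distrib_left)
    finally show "sum h {c' \<in> T. c' x = b} = Q (c x) b * u (c(x := b))" .
  qed
  also have "\<dots> = mat_apply Q (slice u c x) (c x)" by (simp add: mat_apply_def slice_def)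
  also have "\<dots> = u c" unfolding Q by (simp add: slice_def)
  finally show ?case by (simp add: T_def h_def)
qed

lemma sum_prod_mem_tensor_sub:
  fixes w :: "'k \<Rightarrow> 'v::finite \<Rightarrow> 'b \<Rightarrow> complex"
  assumes "finite K" "\<And>k y. k \<in> K \<Longrightarrow> w k y \<in> V"
  shows "(\<lambda>c. \<Sum>k\<in>K. a k * (\<Prod>y\<in>UNIV. w k y (c y))) \<in> tensor_sub V"
proof -
  obtain h where h: "bij_betw h {..<card K} K"
    using ex_bij_betw_nat_finite[OF assms(1)] by (auto simp: atLeast0LessThan)
  have "(\<lambda>c. \<Sum>k\<in>K. a k * (\<Prod>y\<in>UNIV. w k y (c y)))
      = (\<lambda>c. \<Sum>i<card K. a (h i) * (\<Prod>y\<in>UNIV. w (h i) y (c y)))"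
    by (intro ext) (rule sum.reindex_bij_betw[OF h, symmetric])
  moreover have "\<forall>i<card K. \<forall>y. w (h i) y \<in> V"
    using h assms(2) by (auto dest: bij_betwE)
  ultimately show ?thesis
    unfolding tensor_sub_def mem_Collect_eq
    by (intro exI[of _ "card K"] exI[of _ "a \<circ> h"] exI[of _ "w \<circ> h"]) simp
qed

lemma tensor_sub_iff_slices:
  fixes u :: "('v::finite \<Rightarrow> 'b::finite) \<Rightarrow> complex"
  assumes V: "csubspace V"
  shows "u \<in> tensor_sub V \<longleftrightarrow> (\<forall>x c. slice u c x \<in> V)"
proof
  assume slices: "\<forall>x c. slice u c x \<in> V"
  obtain Q where Q: "\<forall>v\<in>V. mat_apply Q v = v" "range (mat_apply Q) \<subseteq> V"
    using orth_projector_onto_subspace[OF V] by blast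
  have "mat_apply Q (slice u c x) = slice u c x" for c x
    using slices Q(1) by blast
  hence "u c = (\<Sum>c'\<in>UNIV. u c' * (\<Prod>y\<in>UNIV. Q (c y) (c' y)))" for c
    using expand_by_slice_projector[of Q u c UNIV] by (simp add: mult.commute)
  hence "u = (\<lambda>c. \<Sum>c'\<in>UNIV. u c' * (\<Prod>y\<in>UNIV. Q (c y) (c' y)))" ..
  moreover have "(\<lambda>a. Q a b) \<in> V" for b
  proof -
    have "mat_apply Q (unit_vec b) \<in> V" using Q(2) by blast
    thus ?thesis by (simp add: mat_apply_unit_vec)
  qed
  hence "(\<lambda>c. \<Sum>c'\<in>UNIV. u c' * (\<Prod>y\<in>UNIV. Q (c y) (c' y))) \<in> tensor_sub V"
    by (intro sum_prod_mem_tensor_sub[where w = "\<lambda>c' y a. Q a (c' y)", simplified])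
  ultimately show "u \<in> tensor_sub V" by simp
qed (use slice_mem_if_tensor_sub[OF V] in blast)

definition site_op :: "('b \<Rightarrow> 'b \<Rightarrow> complex) \<Rightarrow> 'v \<Rightarrow> ('v \<Rightarrow> 'b) \<Rightarrow> ('v \<Rightarrow> 'b) \<Rightarrow> complex"
  where "site_op R x c c' = (if \<forall>z. z \<noteq> x \<longrightarrow> c z = c' z then R (c x) (c' x) else 0)"

lemma site_op_apply:
  fixes R :: "'b::finite \<Rightarrow> 'b \<Rightarrow> complex" and x :: "'v::finite"
  shows "mat_apply (site_op R x) u c = mat_apply R (slice u c x) (c x)"
proof -
  have "mat_apply (site_op R x) u c
      = (\<Sum>c'\<in>UNIV. if \<forall>z. z \<noteq> x \<longrightarrow> c z = c' z then R (c x) (c' x) * u c' else 0)"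
    unfolding mat_apply_def site_op_def by (rule sum.cong) auto
  also have "\<dots> = (\<Sum>c'\<in>{c'. \<forall>z. z \<noteq> x \<longrightarrow> c z = c' z}. R (c x) (c' x) * u c')"
    by (simp add: sum.If_cases)
  also have "{c'. \<forall>z. z \<noteq> x \<longrightarrow> c z = c' z} = range (\<lambda>b. c(x := b))"
    by (auto simp: fun_eq_iff intro: range_eqI[where x = "_ x"])
  also have "inj (\<lambda>b. c(x := b))"
    by (rule injI) (metis fun_upd_same)
  hence "(\<Sum>c'\<in>range (\<lambda>b. c(x := b)). R (c x) (c' x) * u c') = (\<Sum>b\<in>UNIV. R (c x) b * u (c(x := b)))"
    by (simp add: sum.reindex)
  finally show ?thesis by (simp add: mat_apply_def slice_def)
qed

lemma site_op_apply_eq_0_iff: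
  fixes R :: "'b::finite \<Rightarrow> 'b \<Rightarrow> complex" and x :: "'v::finite"
  shows "mat_apply (site_op R x) u = 0 \<longleftrightarrow> (\<forall>c. mat_apply R (slice u c x) = 0)"
proof
  assume "mat_apply (site_op R x) u = 0"
  hence "mat_apply R (slice u c x) b = 0" for c b
    using site_op_apply[of R x u "c(x := b)"] by simp
  thus "\<forall>c. mat_apply R (slice u c x) = 0" by (simp add: fun_eq_iff)
qed (simp add: fun_eq_iff site_op_apply)

lemma orth_projector_site_op:
  fixes R :: "'b::finite \<Rightarrow> 'b \<Rightarrow> complex" and x :: "'v::finite"
  assumes R: "orth_projector R"
  shows "orth_projector (site_op R x)"
proof -
  have "mat_mult (site_op R x) (site_op R x) = site_op R x"
  proof (rule mat_eqI)
    fix u :: "('v \<Rightarrow> 'b) \<Rightarrow> complex"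
    have "slice (mat_apply (site_op R x) u) c x = mat_apply R (slice u c x)" for c
      by (simp add: fun_eq_iff slice_def site_op_apply)
    thus "mat_apply (mat_mult (site_op R x) (site_op R x)) u = mat_apply (site_op R x) u"
      by (intro ext) (simp add: mat_apply_mult site_op_apply orth_projector_idem[OF R])
  qed
  moreover have "hermitian (site_op R x)"
    unfolding hermitian_def
  proof (intro allI)
    fix c c'
    have "R (c' x) (c x) = cnj (R (c x) (c' x))" using R unfolding orth_projector_def hermitian_def by blast
    thus "site_op R x c' c = cnj (site_op R x c c')" by (auto simp: site_op_def)
  qed
  ultimately show ?thesis by (simp add: orth_projector_def)
qed

lemma acts_only_on_site_op: "acts_only_on {x} (site_op R x)"
  unfolding acts_only_on_def site_op_def by auto

lemma site_ops_kernel_eq_tensor_sub: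
  fixes R :: "'b::finite \<Rightarrow> 'b \<Rightarrow> complex" and u :: "('v::finite \<Rightarrow> 'b) \<Rightarrow> complex"
  assumes "csubspace V" and ker_R: "\<And>v. mat_apply R v = 0 \<longleftrightarrow> v \<in> V"
  shows "(\<forall>x. mat_apply (site_op R x) u = 0) \<longleftrightarrow> u \<in> tensor_sub V"
  by (simp add: site_op_apply_eq_0_iff ker_R tensor_sub_iff_slices[OF assms(1)])

section \<open>Permutation invariance and the swap projectors\<close>

lemma perm_op_transpose: "perm_op (Transposition.transpose x y) u c = u (c \<circ> Transposition.transpose x y)"
  by (simp add: perm_op_def)

lemma perm_invariant_iff_transpose_invariant:
  fixes u :: "('v::finite \<Rightarrow> 'b) \<Rightarrow> complex"
  shows "(\<forall>\<sigma>. bij \<sigma> \<longrightarrow> perm_op \<sigma> u = u) \<longleftrightarrow> (\<forall>x y c. u (c \<circ> Transposition.transpose x y) = u c)"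
proof
  assume "\<forall>\<sigma>. bij \<sigma> \<longrightarrow> perm_op \<sigma> u = u"
  thus "\<forall>x y c. u (c \<circ> Transposition.transpose x y) = u c"
    by (metis perm_op_transpose bij_transpose)
next
  assume transp: "\<forall>x y c. u (c \<circ> Transposition.transpose x y) = u c"
  have "\<forall>c. u (c \<circ> p) = u c" if "p permutes (UNIV :: 'v set)" for p
    using that finite_UNIV
  proof (induction rule: permutes_induct)
    case (swap a b p)
    thus ?case using transp by (metis comp_assoc)
  qed simp
  moreover have "inv \<sigma> permutes UNIV" if "bij \<sigma>" for \<sigma> :: "'v \<Rightarrow> 'v"
    using that by (intro bij_imp_permutes bij_imp_bij_inv) auto
  ultimately show "\<forall>\<sigma>. bij \<sigma> \<longrightarrow> perm_op \<sigma> u = u"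
    by (simp add: perm_op_def fun_eq_iff)
qed

lemma transpose_invariant_if_connected:
  assumes "connected_graph E"
    and edge_invariant: "\<And>x y c. E x y \<Longrightarrow> u (c \<circ> Transposition.transpose x y) = u c"
  shows "u (c \<circ> Transposition.transpose x y) = u c"
proof -
  have "(x, y) \<in> {(a, b). E a b}\<^sup>*" using assms(1) unfolding connected_graph_def by blast
  hence "\<forall>c. u (c \<circ> Transposition.transpose x y) = u c"
  proof (induction rule: rtrancl_induct)
    case (step y z)
    hence Eyz: "E y z" by simp
    consider "x = z" | "y = z" | "x \<noteq> z" "y \<noteq> z" by blast
    thus ?case
    proof cases
      case 3
      show ?thesis
      proof
        fix c
        let ?txy = "Transposition.transpose x y" and ?tyz = "Transposition.transpose y z"
        have "u (c \<circ> Transposition.transpose x z) = u (c \<circ> ?txy \<circ> ?tyz \<circ> ?txy)"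
          by (simp flip: transpose_comp_triple[OF 3] add: comp_assoc)
        also have "\<dots> = u (c \<circ> ?txy \<circ> ?tyz)" using step.IH by blast
        also have "\<dots> = u (c \<circ> ?txy)" using edge_invariant[OF Eyz] by blast
        also have "\<dots> = u c" using step.IH by blast
        finally show "u (c \<circ> Transposition.transpose x z) = u c" .
      qed
    qed (use step.IH in auto)
  qed simp
  thus ?thesis by blast
qed

lemma sym_sub_iff:
  fixes u :: "('v::finite \<Rightarrow> 'b) \<Rightarrow> complex"
  shows "u \<in> sym_sub V \<longleftrightarrow> u \<in> tensor_sub V \<and> (\<forall>x y c. u (c \<circ> Transposition.transpose x y) = u c)"
  unfolding sym_sub_def perm_invariant_iff_transpose_invariant by simp

text \<open>For an edge e = {x, y} this is (1 - swap_xy)/2; the existential avoids choosing an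
  orientation of e.\<close>
definition swap_proj :: "'v set \<Rightarrow> ('v \<Rightarrow> 'b) \<Rightarrow> ('v \<Rightarrow> 'b) \<Rightarrow> complex"
  where "swap_proj e c c' =
    (of_bool (c' = c) - of_bool (\<exists>x y. x \<noteq> y \<and> e = {x, y} \<and> c' = c \<circ> Transposition.transpose x y)) / 2"

lemma swap_proj_pair:
  assumes "x \<noteq> y"
  shows "swap_proj {x, y} c c' = (of_bool (c' = c) - of_bool (c' = c \<circ> Transposition.transpose x y)) / 2"
proof -
  have "(\<exists>x' y'. x' \<noteq> y' \<and> {x, y} = {x', y'} \<and> c' = c \<circ> Transposition.transpose x' y')
      \<longleftrightarrow> c' = c \<circ> Transposition.transpose x y"
    using assms by (auto simp: doubleton_eq_iff transpose_commute)
  thus ?thesis by (simp add: swap_proj_def)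
qed

lemma swap_proj_apply:
  fixes u :: "('v::finite \<Rightarrow> 'b::finite) \<Rightarrow> complex"
  assumes "x \<noteq> y"
  shows "mat_apply (swap_proj {x, y}) u c = (u c - u (c \<circ> Transposition.transpose x y)) / 2"
proof -
  have "mat_apply (swap_proj {x, y}) u c
      = (\<Sum>c'\<in>UNIV. of_bool (c' = c) * u c' - of_bool (c' = c \<circ> Transposition.transpose x y) * u c') / 2"
    unfolding mat_apply_def swap_proj_pair[OF assms] sum_divide_distrib
    by (rule sum.cong) (auto simp: eq_commute)
  thus ?thesis by (simp add: sum_subtractf)
qed

lemma swap_proj_apply_eq_0_iff:
  fixes u :: "('v::finite \<Rightarrow> 'b::finite) \<Rightarrow> complex"
  assumes "x \<noteq> y"
  shows "mat_apply (swap_proj {x, y}) u = 0 \<longleftrightarrow> (\<forall>c. u (c \<circ> Transposition.transpose x y) = u c)"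
  by (auto simp: fun_eq_iff swap_proj_apply[OF assms])

lemma orth_projector_swap_proj:
  assumes "x \<noteq> y"
  shows "orth_projector (swap_proj {x, y} :: ('v::finite \<Rightarrow> 'b::finite) \<Rightarrow> _)"
proof -
  let ?t = "Transposition.transpose x y"
  have tt: "c \<circ> ?t \<circ> ?t = c" for c :: "'v \<Rightarrow> 'b" by (simp add: comp_assoc)
  have "mat_mult (swap_proj {x, y}) (swap_proj {x, y}) = (swap_proj {x, y} :: ('v \<Rightarrow> 'b) \<Rightarrow> _)"
    by (rule mat_eqI) (simp add: mat_apply_mult fun_eq_iff swap_proj_apply[OF assms] tt field_simps)
  moreover have "hermitian (swap_proj {x, y} :: ('v \<Rightarrow> 'b) \<Rightarrow> _)"
    unfolding hermitian_def swap_proj_pair[OF assms]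
  proof (intro allI)
    fix c c' :: "'v \<Rightarrow> 'b"
    have "(c = c' \<circ> ?t) \<longleftrightarrow> (c' = c \<circ> ?t)" by (metis tt)
    thus "(of_bool (c = c') - of_bool (c = c' \<circ> ?t)) / 2
        = cnj ((of_bool (c' = c) - of_bool (c' = c \<circ> ?t)) / 2)"
      by (simp add: eq_commute[of c c'])
  qed
  ultimately show ?thesis by (simp add: orth_projector_def)
qed

lemma acts_only_on_swap_proj:
  fixes x y :: 'v
  assumes "x \<noteq> y"
  shows "acts_only_on {x, y} (swap_proj {x, y} :: ('v \<Rightarrow> 'b) \<Rightarrow> _)"
proof -
  let ?t = "Transposition.transpose x y"
  have transposed: "(c' = c \<circ> ?t) \<longleftrightarrow> (c' x = c y \<and> c' y = c x \<and> (\<forall>z. z \<notin> {x, y} \<longrightarrow> c' z = c z))"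
    for c c' :: "'v \<Rightarrow> 'b"
    by (auto simp: fun_eq_iff transpose_def)
  have equal: "(c' = c) \<longleftrightarrow> (c' x = c x \<and> c' y = c y \<and> (\<forall>z. z \<notin> {x, y} \<longrightarrow> c' z = c z))"
    for c c' :: "'v \<Rightarrow> 'b"
    by (auto simp: fun_eq_iff)
  show ?thesis
    unfolding acts_only_on_def swap_proj_pair[OF assms]
  proof (intro conjI allI impI)
    fix c c' :: "'v \<Rightarrow> 'b"
    assume "\<exists>z. z \<notin> {x, y} \<and> c z \<noteq> c' z"
    hence "c' \<noteq> c" "c' \<noteq> c \<circ> ?t" unfolding transposed equal by auto
    thus "(of_bool (c' = c) - of_bool (c' = c \<circ> ?t)) / 2 = (0 :: complex)" by simp
  next
    fix c c' d d' :: "'v \<Rightarrow> 'b"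
    assume "\<forall>z\<in>{x, y}. c z = d z \<and> c' z = d' z" "\<forall>z. z \<notin> {x, y} \<longrightarrow> c z = c' z"
      "\<forall>z. z \<notin> {x, y} \<longrightarrow> d z = d' z"
    hence "(c' = c) = (d' = d)" "(c' = c \<circ> ?t) = (d' = d \<circ> ?t)"
      unfolding transposed equal by auto
    thus "(of_bool (c' = c) - of_bool (c' = c \<circ> ?t)) / 2
        = (of_bool (d' = d) - of_bool (d' = d \<circ> ?t)) / (2 :: complex)" by simp
  qed
qed

section \<open>The decomposition\<close>

lemma mat_apply_sum:
  fixes P :: "'a \<Rightarrow> 'i::finite \<Rightarrow> 'i \<Rightarrow> complex"
  shows "mat_apply (\<lambda>c c'. \<Sum>i\<in>I. P i c c') u = (\<Sum>i\<in>I. mat_apply (P i) u)"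
  unfolding mat_apply_def sum_fun_apply sum_distrib_right by (rule ext, rule sum.swap)

lemma kernel_sum_orth_projectors:
  fixes P :: "'a \<Rightarrow> 'i::finite \<Rightarrow> 'i \<Rightarrow> complex"
  assumes "finite I" and proj: "\<forall>i\<in>I. orth_projector (P i)"
    and "mat_apply (\<lambda>c c'. \<Sum>i\<in>I. P i c c') u = 0"
  shows "\<forall>i\<in>I. mat_apply (P i) u = 0"
proof -
  have "0 = cinner u (\<Sum>i\<in>I. mat_apply (P i) u)"
    using assms(3) by (simp add: mat_apply_sum cinner_def)
  also have "\<dots> = (\<Sum>i\<in>I. cinner u (mat_apply (P i) u))"
    by (rule cinner_sum_right)
  also have "\<dots> = (\<Sum>i\<in>I. of_real (sq_norm (mat_apply (P i) u)))"
    using proj by (intro sum.cong refl) (rule cinner_orth_projector, blast)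
  also have "\<dots> = of_real (\<Sum>i\<in>I. sq_norm (mat_apply (P i) u))"
    by (rule of_real_sum[symmetric])
  finally have "of_real (\<Sum>i\<in>I. sq_norm (mat_apply (P i) u)) = (0 :: complex)"
    by (rule sym)
  hence "(\<Sum>i\<in>I. sq_norm (mat_apply (P i) u)) = 0" by (simp only: of_real_eq_0_iff)
  thus ?thesis
    using assms(1) by (simp add: sum_nonneg_eq_0_iff sq_norm_nonneg sq_norm_eq_0_iff)
qed

lemma factor_through_orth_projectors:
  fixes P :: "'a \<Rightarrow> 'i::finite \<Rightarrow> 'i \<Rightarrow> complex"
  assumes "finite I" "\<forall>i\<in>I. orth_projector (P i)"
    and "\<And>u. \<forall>i\<in>I. mat_apply (P i) u = 0 \<Longrightarrow> mat_apply A u = 0"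
  shows "\<exists>X. A = (\<lambda>c c'. \<Sum>i\<in>I. mat_mult X (P i) c c')"
proof -
  have "mat_apply A u = 0" if "mat_apply (\<lambda>c c'. \<Sum>i\<in>I. P i c c') u = 0" for u
    using assms kernel_sum_orth_projectors[OF assms(1,2) that] by blast
  then obtain X where "A = mat_mult X (\<lambda>c c'. \<Sum>i\<in>I. P i c c')"
    using mat_factor_through_kernel by blast
  also have "\<dots> = (\<lambda>c c'. \<Sum>i\<in>I. mat_mult X (P i) c c')"
    unfolding mat_mult_def sum_distrib_left by (intro ext sum.swap)
  finally show ?thesis by blast
qed

lemma edgesE:
  assumes "e \<in> edges E" "\<And>x. \<not> E x x"
  obtains x y where "E x y" "x \<noteq> y" "e = {x, y}"
  using assms unfolding edges_def by blast

lemma common_kernel_eq_sym_sub: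
  fixes R :: "'b::finite \<Rightarrow> 'b \<Rightarrow> complex" and u :: "('v::finite \<Rightarrow> 'b) \<Rightarrow> complex"
  assumes "csubspace V" "\<And>v. mat_apply R v = 0 \<longleftrightarrow> v \<in> V"
    and irrefl: "\<And>x. \<not> E x x" and conn: "connected_graph E"
  shows "(\<forall>x. mat_apply (site_op R x) u = 0) \<and> (\<forall>e\<in>edges E. mat_apply (swap_proj e) u = 0)
    \<longleftrightarrow> u \<in> sym_sub V"
proof -
  have "(\<forall>e\<in>edges E. mat_apply (swap_proj e) u = 0)
      \<longleftrightarrow> (\<forall>x y. E x y \<longrightarrow> mat_apply (swap_proj {x, y}) u = 0)"
    by (auto simp: edges_def)
  also have "\<dots> \<longleftrightarrow> (\<forall>x y c. E x y \<longrightarrow> u (c \<circ> Transposition.transpose x y) = u c)"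
    by (metis irrefl swap_proj_apply_eq_0_iff)
  also have "\<dots> \<longleftrightarrow> (\<forall>x y c. u (c \<circ> Transposition.transpose x y) = u c)"
    using transpose_invariant_if_connected[OF conn] by blast
  finally show ?thesis
    by (simp add: site_ops_kernel_eq_tensor_sub[OF assms(1,2)] sym_sub_iff)
qed

theorem lemma5p1:
  fixes E :: "'v::finite \<Rightarrow> 'v \<Rightarrow> bool"
    and hs :: "('b::finite \<Rightarrow> complex) set"
    and Op :: "('v \<Rightarrow> 'b) \<Rightarrow> ('v \<Rightarrow> 'b) \<Rightarrow> complex"
  assumes sym: "\<And>x y. E x y \<Longrightarrow> E y x"
    and irrefl: "\<And>x. \<not> E x x"
    and conn: "connected_graph E"
    and sub: "csubspace hs"
    and ann: "annihilates Op (sym_sub hs)"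
  shows "\<exists>(o1 :: 'v \<Rightarrow> ('v \<Rightarrow> 'b) \<Rightarrow> ('v \<Rightarrow> 'b) \<Rightarrow> complex) P1
          (o2 :: 'v set \<Rightarrow> ('v \<Rightarrow> 'b) \<Rightarrow> ('v \<Rightarrow> 'b) \<Rightarrow> complex) P2.
     (\<forall>x. is_orth_proj (P1 x) \<and> acts_only_on {x} (P1 x) \<and> annihilates (P1 x) (sym_sub hs)) \<and>
     (\<forall>e\<in>edges E. is_orth_proj (P2 e) \<and> acts_only_on e (P2 e) \<and> annihilates (P2 e) (sym_sub hs)) \<and>
     Op = (\<lambda>c c'. (\<Sum>x\<in>UNIV. op_mult (o1 x) (P1 x) c c') + (\<Sum>e\<in>edges E. op_mult (o2 e) (P2 e) c c'))"
proof -
  obtain R :: "'b \<Rightarrow> 'b \<Rightarrow> complex" where R: "orth_projector R" "\<And>v. mat_apply R v = 0 \<longleftrightarrow> v \<in> hs"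
    using orth_projector_with_kernel[OF sub] by blast
  note kernel = common_kernel_eq_sym_sub[OF sub R(2) irrefl conn]
  have swap: "orth_projector (swap_proj e :: ('v \<Rightarrow> 'b) \<Rightarrow> _) \<and> acts_only_on e (swap_proj e :: ('v \<Rightarrow> 'b) \<Rightarrow> _)"
    if "e \<in> edges E" for e
    using edgesE[OF that irrefl] by (metis orth_projector_swap_proj acts_only_on_swap_proj)
  let ?P = "case_sum (site_op R) swap_proj"
  have "\<forall>i\<in>UNIV <+> edges E. orth_projector (?P i)"
    using swap by (auto simp: orth_projector_site_op[OF R(1)])
  moreover have "mat_apply Op u = 0" if "\<forall>i\<in>UNIV <+> edges E. mat_apply (?P i) u = 0" for u
    using that kernel ann by (simp add: Plus_def ball_Un Ball_image_comp o_def annihilates_iff)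
  ultimately obtain X where X: "Op = (\<lambda>c c'. \<Sum>i\<in>UNIV <+> edges E. mat_mult X (?P i) c c')"
    using factor_through_orth_projectors[of "UNIV <+> edges E" ?P Op] by auto
  show ?thesis
  proof (intro exI conjI allI ballI)
    show "Op = (\<lambda>c c'. (\<Sum>x\<in>UNIV. op_mult X (site_op R x) c c') + (\<Sum>e\<in>edges E. op_mult X (swap_proj e) c c'))"
      unfolding X op_mult_eq_mat_mult by (simp add: sum.Plus)
  qed (use swap kernel in \<open>auto simp: is_orth_proj_iff orth_projector_site_op[OF R(1)] acts_only_on_site_op
        annihilates_iff\<close>)
qed

end
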